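(* Let $q\ge1$. For every closed planar $C^2$ curve $\bm\gamma$ it holds that $$\int_{\bm\gamma}|\kappa_{\bm\gamma}|^q\,d\mathcal H^1\ge(\mathrm{diam}\,\bm\gamma)^{1-q},$$ where $\kappa_{\bm\gamma}$ denotes the curvature of $\bm\gamma$. *)

theory Defs
  imports "HOL-Analysis.Analysis"
begin

text \<open>Periodicity of gamma (together with differentiability everywhere) makes the
  curve closed in the C^2 sense (derivatives match at the endpoints of a period).\<close>

definition closed_C2_curve :: "(real \<Rightarrow> real^2) \<Rightarrow> real \<Rightarrow> bool" where
  "closed_C2_curve \<gamma> L \<longleftrightarrow>
     L > 0 \<and> (\<forall>t. \<gamma> (t + L) = \<gamma> t) \<and>
     (\<exists>\<gamma>1 \<gamma>2. (\<forall>t. (\<gamma> has_vector_derivative \<gamma>1 t) (at t)) \<and>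
              (\<forall>t. (\<gamma>1 has_vector_derivative \<gamma>2 t) (at t)) \<and>
              continuous_on UNIV \<gamma>2) \<and>
     (\<forall>t. vector_derivative \<gamma> (at t) \<noteq> 0)"

definition curvature :: "(real \<Rightarrow> real^2) \<Rightarrow> real \<Rightarrow> real" where
  "curvature \<gamma> t =
     (let d1 = vector_derivative \<gamma> (at t);
          d2 = vector_derivative (\<lambda>s. vector_derivative \<gamma> (at s)) (at t)
      in (d1$1 * d2$2 - d1$2 * d2$1) / norm d1 ^ 3)"

definition curve_integral_ds :: "(real \<Rightarrow> real^2) \<Rightarrow> real \<Rightarrow> (real \<Rightarrow> real) \<Rightarrow> real" where
  "curve_integral_ds \<gamma> L f = integral {0..L} (\<lambda>t. f t * norm (vector_derivative \<gamma> (at t)))"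

end

theory Submission
  imports Defs "HOL-Library.Periodic_Fun"
begin

text \<open>Let \<open>T = sgn \<gamma>'\<close> be the unit tangent. In the plane \<open>|T'| = |\<kappa>| |\<gamma>'|\<close>, so
  \<open>\<integral>|T'|\<close> is the total turning of an arc. Bounding \<open>x powr q\<close> from below by its tangent
  line at \<open>1/D\<close>, where \<open>D = diam \<gamma>\<close>, shows that an arc of length at most \<open>D\<close> that turns
  by at least 1 already carries energy \<open>\<integral>|\<kappa>| powr q ds \<ge> D powr (1 - q)\<close>.
  Such an arc exists: take two consecutive arcs of length \<open>h = min D (length/2)\<close>. If both
  turned by less than 1, every tangent along them would stay within distance 1 of the tangent
  \<open>e\<close> at the common point, so \<open>T \<bullet> e > 1/2\<close> and the chord would be longer than \<open>h\<close>; but it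
  is at most \<open>D\<close>, and it is zero when the two arcs make up the whole closed curve.\<close>

lemma powr_ge_tangent_line:
  fixes x c q :: real
  assumes "x \<ge> 0" "c > 0" "q \<ge> 1"
  shows "q * c powr (q - 1) * x - (q - 1) * c powr q \<le> x powr q"
proof (cases "x = 0")
  case False
  have "((\<lambda>x. x powr q) has_real_derivative q * c powr (q - 1)) (at c within {0<..})"
    using assms by (auto intro!: derivative_eq_intros)
  from convex_on_imp_above_tangent[OF powr_convex[OF assms(3)] _ _ _ this]
  have "q * c powr (q - 1) * (x - c) \<le> x powr q - c powr q"
    using assms False by (auto simp: interior_open)
  moreover have "c powr (q - 1) * c = c powr q"
    using assms by (simp add: powr_diff)
  then have "c * (q * c powr (q - 1)) = q * c powr q"
    by (simp add: algebra_simps)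
  ultimately show ?thesis by (simp add: algebra_simps)
qed (use assms in simp)

lemma weighted_powr_integral_lower_bound:
  fixes \<kappa> v :: "real \<Rightarrow> real"
  assumes q: "q \<ge> 1" and D: "D > 0"
    and nonneg: "\<And>t. t \<in> {a..b} \<Longrightarrow> \<kappa> t \<ge> 0 \<and> v t \<ge> 0"
    and int: "v integrable_on {a..b}" "(\<lambda>t. \<kappa> t * v t) integrable_on {a..b}"
      "(\<lambda>t. \<kappa> t powr q * v t) integrable_on {a..b}"
    and length: "integral {a..b} v \<le> D"
    and turning: "1 \<le> integral {a..b} (\<lambda>t. \<kappa> t * v t)"
  shows "D powr (1 - q) \<le> integral {a..b} (\<lambda>t. \<kappa> t powr q * v t)"
proof -
  define c where "c = 1 / D"
  have c: "c > 0" using D by (simp add: c_def)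
  have cD: "c powr (q - 1) = D powr (1 - q)" "c powr q * D = c powr (q - 1)"
    using D by (simp_all add: c_def powr_divide powr_minus_divide powr_diff)
  have pointwise: "q * c powr (q - 1) * (\<kappa> t * v t) - (q - 1) * c powr q * v t \<le> \<kappa> t powr q * v t"
    if "t \<in> {a..b}" for t
    using mult_right_mono[OF powr_ge_tangent_line[OF _ c q, of "\<kappa> t"], of "v t"] nonneg[OF that]
    by (simp add: algebra_simps)
  have "D powr (1 - q) = q * c powr (q - 1) * 1 - (q - 1) * c powr q * D"
    using cD by (simp add: algebra_simps)
  also have "\<dots> \<le> q * c powr (q - 1) * integral {a..b} (\<lambda>t. \<kappa> t * v t) - (q - 1) * c powr q * integral {a..b} v"
    using q c length turning by (intro diff_mono mult_left_mono) auto
  also have "\<dots> = integral {a..b} (\<lambda>t. q * c powr (q - 1) * (\<kappa> t * v t) - (q - 1) * c powr q * v t)"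
    using int by (subst integral_diff) (auto intro: integrable_on_mult_right)
  also have "\<dots> \<le> integral {a..b} (\<lambda>t. \<kappa> t powr q * v t)"
    using int pointwise by (intro integral_le integrable_diff integrable_on_mult_right) auto
  finally show ?thesis .
qed

lemma norm_diff_le_integral_norm_derivative:
  fixes f f' :: "real \<Rightarrow> 'a::euclidean_space"
  assumes "a \<le> u" "u \<le> v" "v \<le> b"
    and f': "\<And>t. (f has_vector_derivative f' t) (at t)" "continuous_on UNIV f'"
  shows "norm (f v - f u) \<le> integral {a..b} (\<lambda>t. norm (f' t))"
proof -
  have int: "(\<lambda>t. norm (f' t)) integrable_on {x..y}" for x y
    by (intro integrable_continuous_interval continuous_on_norm continuous_on_subset[OF f'(2)]) simp
  have "(f' has_integral (f v - f u)) {u..v}"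
    using assms by (intro fundamental_theorem_of_calculus) (auto intro: has_vector_derivative_at_within)
  then have "norm (f v - f u) \<le> integral {u..v} (\<lambda>t. norm (f' t))"
    using int integral_norm_bound_integral[of f' "{u..v}" "\<lambda>t. norm (f' t)"]
    by (auto simp: integral_unique)
  also have "\<dots> \<le> integral {a..b} (\<lambda>t. norm (f' t))"
    using assms int by (intro integral_subset_le) auto
  finally show ?thesis .
qed

lemma chord_inner_ge:
  fixes \<gamma> \<gamma>' :: "real \<Rightarrow> 'a::euclidean_space"
  assumes "a \<le> b"
    and \<gamma>': "\<And>t. (\<gamma> has_vector_derivative \<gamma>' t) (at t)" "continuous_on UNIV \<gamma>'"
    and e: "norm e = 1" and close: "\<And>u. u \<in> {a..b} \<Longrightarrow> norm (sgn (\<gamma>' u) - e) \<le> K"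
  shows "(1 - K\<^sup>2 / 2) * integral {a..b} (\<lambda>t. norm (\<gamma>' t)) \<le> (\<gamma> b - \<gamma> a) \<bullet> e"
proof -
  have pointwise: "norm (\<gamma>' u) * (1 - K\<^sup>2 / 2) \<le> \<gamma>' u \<bullet> e" if u: "u \<in> {a..b}" for u
  proof (cases "\<gamma>' u = 0")
    case False
    let ?T = "sgn (\<gamma>' u)"
    have "(norm (?T - e))\<^sup>2 = 2 - 2 * (?T \<bullet> e)"
      using False e dot_norm_neg[of ?T e] by (simp add: norm_sgn)
    moreover have "(norm (?T - e))\<^sup>2 \<le> K\<^sup>2"
      using close[OF u] by (simp add: power_mono)
    moreover have "\<gamma>' u \<bullet> e = norm (\<gamma>' u) * (?T \<bullet> e)"
      using False by (simp add: sgn_div_norm)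
    ultimately show ?thesis by (simp add: mult_left_mono)
  qed simp
  have "(\<gamma>' has_integral \<gamma> b - \<gamma> a) {a..b}"
    using assms by (intro fundamental_theorem_of_calculus) (auto intro: has_vector_derivative_at_within)
  from has_integral_linear[OF this bounded_linear_inner_left]
  have chord: "((\<lambda>t. \<gamma>' t \<bullet> e) has_integral (\<gamma> b - \<gamma> a) \<bullet> e) {a..b}"
    by (simp add: o_def)
  have "(\<lambda>t. norm (\<gamma>' t)) integrable_on {a..b}"
    by (intro integrable_continuous_interval continuous_on_norm continuous_on_subset[OF \<gamma>'(2)]) simp
  from has_integral_le[OF has_integral_mult_left[OF integrable_integral[OF this]] chord pointwise]
  show ?thesis by (simp add: mult.commute)
qed

lemma chord_gt_of_two_arcs_turning_lt_one:
  fixes \<gamma> \<gamma>' T' :: "real \<Rightarrow> 'a::euclidean_space"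
  assumes "a \<le> m" "m \<le> b"
    and \<gamma>': "\<And>t. (\<gamma> has_vector_derivative \<gamma>' t) (at t)" "continuous_on UNIV \<gamma>'"
      "\<And>t. \<gamma>' t \<noteq> 0"
    and T': "\<And>t. ((\<lambda>t. sgn (\<gamma>' t)) has_vector_derivative T' t) (at t)" "continuous_on UNIV T'"
    and h: "h > 0" "integral {a..m} (\<lambda>t. norm (\<gamma>' t)) = h" "integral {m..b} (\<lambda>t. norm (\<gamma>' t)) = h"
    and "integral {a..m} (\<lambda>t. norm (T' t)) < 1" "integral {m..b} (\<lambda>t. norm (T' t)) < 1"
  shows "h < norm (\<gamma> b - \<gamma> a)"
proof -
  define e where "e = sgn (\<gamma>' m)"
  have e: "norm e = 1" using \<gamma>'(3) by (simp add: e_def norm_sgn)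
  have half: "h / 2 < (\<gamma> y - \<gamma> x) \<bullet> e"
    if "x \<le> y" "m \<in> {x, y}" "integral {x..y} (\<lambda>t. norm (\<gamma>' t)) = h"
      "integral {x..y} (\<lambda>t. norm (T' t)) < 1" for x y
  proof -
    define K where "K = integral {x..y} (\<lambda>t. norm (T' t))"
    have "norm (sgn (\<gamma>' u) - e) \<le> K" if "u \<in> {x..y}" for u
      using that \<open>m \<in> {x, y}\<close> norm_diff_le_integral_norm_derivative[OF _ _ _ T', of x _ _ y]
      by (auto simp: K_def e_def norm_minus_commute)
    then have "(1 - K\<^sup>2 / 2) * h \<le> (\<gamma> y - \<gamma> x) \<bullet> e"
      using chord_inner_ge[OF \<open>x \<le> y\<close> \<gamma>'(1,2) e] \<open>integral {x..y} _ = h\<close> by simp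
    moreover have "0 \<le> K"
      by (auto simp: K_def intro!: integral_nonneg integrable_continuous_interval
          continuous_on_norm continuous_on_subset[OF T'(2)])
    with that(4) have "K\<^sup>2 < 1"
      by (simp add: K_def power_less_one_iff)
    then have "h / 2 < (1 - K\<^sup>2 / 2) * h"
      using h(1) mult_strict_left_mono[of "K\<^sup>2" 1 h] by (simp add: field_simps)
    ultimately show ?thesis by linarith
  qed
  have "h < (\<gamma> m - \<gamma> a) \<bullet> e + (\<gamma> b - \<gamma> m) \<bullet> e"
    using half[of a m] half[of m b] assms by fastforce
  also have "\<dots> = (\<gamma> b - \<gamma> a) \<bullet> e"
    by (simp add: inner_diff_left)
  also have "\<dots> \<le> norm (\<gamma> b - \<gamma> a)"
    using norm_cauchy_schwarz[of "\<gamma> b - \<gamma> a" e] e by simp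
  finally show ?thesis .
qed

lemma closed_curve_has_short_arc_turning_ge_one:
  fixes \<gamma> \<gamma>' T' :: "real \<Rightarrow> 'a::euclidean_space"
  assumes L: "L > 0" "\<gamma> L = \<gamma> 0"
    and D: "D > 0" "\<And>t. t \<in> {0..L} \<Longrightarrow> norm (\<gamma> t - \<gamma> 0) \<le> D"
    and \<gamma>': "\<And>t. (\<gamma> has_vector_derivative \<gamma>' t) (at t)" "continuous_on UNIV \<gamma>'"
      "\<And>t. \<gamma>' t \<noteq> 0"
    and T': "\<And>t. ((\<lambda>t. sgn (\<gamma>' t)) has_vector_derivative T' t) (at t)" "continuous_on UNIV T'"
  obtains a b where "0 \<le> a" "a \<le> b" "b \<le> L"
    "integral {a..b} (\<lambda>t. norm (\<gamma>' t)) \<le> D" "1 \<le> integral {a..b} (\<lambda>t. norm (T' t))"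
proof -
  have speed_cont: "continuous_on S (\<lambda>t. norm (\<gamma>' t))" for S
    by (intro continuous_on_norm continuous_on_subset[OF \<gamma>'(2)]) simp
  define s where "s u = integral {0..u} (\<lambda>t. norm (\<gamma>' t))" for u
  have s_cont: "continuous_on {0..L} s"
    unfolding s_def by (intro indefinite_integral_continuous_1 integrable_continuous_interval speed_cont)
  have s_add: "s x + integral {x..y} (\<lambda>t. norm (\<gamma>' t)) = s y" if "0 \<le> x" "x \<le> y" for x y
    unfolding s_def using that
    by (intro Henstock_Kurzweil_Integration.integral_combine integrable_continuous_interval speed_cont)
  have "0 < s L"
  proof -
    obtain t0 where "t0 \<in> {0..L}" and t0: "\<And>t. t \<in> {0..L} \<Longrightarrow> norm (\<gamma>' t0) \<le> norm (\<gamma>' t)"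
      using continuous_attains_inf[of "{0..L}", OF _ _ speed_cont] L(1) by auto
    have "0 < L * norm (\<gamma>' t0)" using L(1) \<gamma>'(3) by simp
    also have "\<dots> \<le> s L"
      using integral_le[of "\<lambda>_. norm (\<gamma>' t0)" "{0..L}" "\<lambda>t. norm (\<gamma>' t)"] t0 L(1)
      by (simp add: s_def integrable_continuous_interval speed_cont)
    finally show ?thesis .
  qed
  define h where "h = min D (s L / 2)"
  have h: "0 < h" "h \<le> D" using D(1) \<open>0 < s L\<close> by (auto simp: h_def)
  obtain b where b: "0 \<le> b" "b \<le> L" "s b = 2 * h" "norm (\<gamma> b - \<gamma> 0) \<le> h"
  proof (cases "D \<le> s L / 2")
    case True
    then have "h = D" by (simp add: h_def)
    have "s 0 \<le> 2 * h" "2 * h \<le> s L"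
      using h(1) True by (simp_all add: s_def h_def)
    from IVT'[OF this _ s_cont] L(1)
    obtain b where "0 \<le> b" "b \<le> L" "s b = 2 * h" by auto
    with D(2)[of b] \<open>h = D\<close> show ?thesis by (intro that) auto
  next
    case False
    then have "s L = 2 * h" by (simp add: h_def)
    with L h(1) show ?thesis by (intro that[of L]) auto
  qed
  have "s 0 \<le> h" "h \<le> s b" "continuous_on {0..b} s"
    using h(1) b(2,3) continuous_on_subset[OF s_cont] by (auto simp: s_def)
  from IVT'[OF this(1-2) b(1) this(3)]
  obtain m where m: "0 \<le> m" "m \<le> b" "s m = h" by auto
  have lengths: "integral {0..m} (\<lambda>t. norm (\<gamma>' t)) = h" "integral {m..b} (\<lambda>t. norm (\<gamma>' t)) = h"
    using m b s_add[of m b] by (simp_all add: s_def)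
  have "\<not> (integral {0..m} (\<lambda>t. norm (T' t)) < 1 \<and> integral {m..b} (\<lambda>t. norm (T' t)) < 1)"
    using chord_gt_of_two_arcs_turning_lt_one[OF m(1,2) \<gamma>' T' h(1) lengths] b(4) by linarith
  then show ?thesis
    using that[of 0 m] that[of m b] m b(1,2) lengths h(2) by (metis order.trans not_less order.refl)
qed

lemma closed_curve_curvature_energy_ge:
  fixes \<gamma> \<gamma>' T' :: "real \<Rightarrow> 'a::euclidean_space" and \<kappa> :: "real \<Rightarrow> real"
  assumes q: "q \<ge> 1" and L: "L > 0" "\<gamma> L = \<gamma> 0"
    and D: "D \<ge> 0" "\<And>t. t \<in> {0..L} \<Longrightarrow> norm (\<gamma> t - \<gamma> 0) \<le> D"
    and \<gamma>': "\<And>t. (\<gamma> has_vector_derivative \<gamma>' t) (at t)" "continuous_on UNIV \<gamma>'"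
      "\<And>t. \<gamma>' t \<noteq> 0"
    and T': "\<And>t. ((\<lambda>t. sgn (\<gamma>' t)) has_vector_derivative T' t) (at t)" "continuous_on UNIV T'"
    and \<kappa>: "\<And>t. norm (T' t) = \<kappa> t * norm (\<gamma>' t)" "continuous_on UNIV \<kappa>"
  shows "D powr (1 - q) \<le> integral {0..L} (\<lambda>t. \<kappa> t powr q * norm (\<gamma>' t))"
proof -
  have \<kappa>_nonneg: "0 \<le> \<kappa> t" for t
  proof -
    have "0 \<le> \<kappa> t * norm (\<gamma>' t)" by (metis \<kappa>(1) norm_ge_zero)
    with \<gamma>'(3)[of t] show ?thesis by (simp add: zero_le_mult_iff)
  qed
  have int: "(\<lambda>t. \<kappa> t powr q * norm (\<gamma>' t)) integrable_on {a..b}"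
    "(\<lambda>t. norm (\<gamma>' t)) integrable_on {a..b}" "(\<lambda>t. \<kappa> t * norm (\<gamma>' t)) integrable_on {a..b}" for a b
    using q \<kappa>_nonneg
    by (auto intro!: integrable_continuous_interval continuous_intros continuous_on_powr'
        continuous_on_subset[OF \<kappa>(2)] continuous_on_subset[OF \<gamma>'(2)])
  show ?thesis
  proof (cases "D = 0")
    case True
    then show ?thesis
      using q by (simp add: integral_nonneg int)
  next
    case False
    with D(1) have "0 < D" by simp
    then obtain a b where arc: "0 \<le> a" "a \<le> b" "b \<le> L"
      "integral {a..b} (\<lambda>t. norm (\<gamma>' t)) \<le> D" "1 \<le> integral {a..b} (\<lambda>t. norm (T' t))"
      using closed_curve_has_short_arc_turning_ge_one[OF L _ D(2) \<gamma>' T'] by blast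
    have "D powr (1 - q) \<le> integral {a..b} (\<lambda>t. \<kappa> t powr q * norm (\<gamma>' t))"
      using \<open>0 < D\<close> arc(4,5) int \<kappa>_nonneg
      by (intro weighted_powr_integral_lower_bound[OF q]) (simp_all add: \<kappa>(1))
    also have "\<dots> \<le> integral {0..L} (\<lambda>t. \<kappa> t powr q * norm (\<gamma>' t))"
      using arc int by (intro integral_subset_le) auto
    finally show ?thesis .
  qed
qed

lemma bounded_range_periodic:
  fixes f :: "real \<Rightarrow> 'a::metric_space"
  assumes "continuous_on UNIV f" "L > 0" "\<And>t. f (t + L) = f t"
  shows "bounded (range f)"
proof -
  interpret periodic_fun_simple f L
    by unfold_locales (rule assms(3))
  have "f t \<in> f ` {0..L}" for t
  proof
    define k where "k = \<lfloor>t / L\<rfloor>"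
    have "of_int k * L \<le> t" "t \<le> (of_int k + 1) * L"
      using assms(2) floor_divide_lower[of L t] floor_divide_upper[of L t] by (auto simp: k_def)
    then show "t - of_int k * L \<in> {0..L}" by (simp add: algebra_simps)
    show "f t = f (t - of_int k * L)"
      using minus_of_int[of t k] by simp
  qed
  then have "range f = f ` {0..L}" by auto
  then show ?thesis
    using assms(1) by (metis compact_Icc compact_continuous_image compact_imp_bounded continuous_on_subset top_greatest)
qed

lemma has_vector_derivative_sgn:
  fixes g :: "real \<Rightarrow> 'a::real_inner"
  assumes g': "(g has_vector_derivative g') (at t)" and "g t \<noteq> 0"
  shows "((\<lambda>t. sgn (g t)) has_vector_derivative
           (1 / norm (g t)) *\<^sub>R g' - ((g t \<bullet> g') / norm (g t) ^ 3) *\<^sub>R g t) (at t)"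
proof -
  have "((\<lambda>t. norm (g t)) has_derivative (\<lambda>h. (g t \<bullet> g') / norm (g t) * h)) (at t)"
    using has_derivative_compose[OF g'[unfolded has_vector_derivative_def] has_derivative_norm[OF assms(2)]]
    by (simp add: sgn_div_norm inner_commute divide_inverse mult_ac)
  then have "((\<lambda>t. norm (g t)) has_real_derivative (g t \<bullet> g') / norm (g t)) (at t)"
    by (rule has_derivative_imp_has_field_derivative) simp
  from has_vector_derivative_scaleR[OF DERIV_inverse_fun[OF this] g'] assms(2)
  show ?thesis
    by (simp add: sgn_div_norm divide_inverse power2_eq_square power3_eq_cube algebra_simps)
qed

lemma cross2_squared_eq:
  fixes x y :: "real^2"
  shows "(x$1 * y$2 - x$2 * y$1)\<^sup>2 = (norm x)\<^sup>2 * (norm y)\<^sup>2 - (x \<bullet> y)\<^sup>2"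
  unfolding power2_norm_eq_inner by (simp add: inner_vec_def sum_2 power2_eq_square algebra_simps)

lemma norm_sgn_derivative_eq_cross2:
  fixes x y :: "real^2"
  assumes "x \<noteq> 0"
  shows "norm ((1 / norm x) *\<^sub>R y - ((x \<bullet> y) / norm x ^ 3) *\<^sub>R x) = \<bar>x$1 * y$2 - x$2 * y$1\<bar> / (norm x)\<^sup>2"
proof (rule power2_eq_imp_eq)
  define n where "n = norm x"
  have n: "n > 0" using assms by (simp add: n_def)
  have xx: "x \<bullet> x = n\<^sup>2" by (simp add: n_def power2_norm_eq_inner)
  let ?v = "(1 / n) *\<^sub>R y - ((x \<bullet> y) / n ^ 3) *\<^sub>R x"
  have "(norm ?v)\<^sup>2 = ?v \<bullet> ?v"
    by (simp add: power2_norm_eq_inner)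
  also have "\<dots> = (y \<bullet> y) / n\<^sup>2 - 2 * (x \<bullet> y)\<^sup>2 / n ^ 4 + (x \<bullet> y)\<^sup>2 * (x \<bullet> x) / n ^ 6"
    using n by (simp add: inner_diff_left inner_diff_right inner_commute
        power2_eq_square field_simps eval_nat_numeral)
  also have "\<dots> = (n\<^sup>2 * (y \<bullet> y) - (x \<bullet> y)\<^sup>2) / n ^ 4"
    using n unfolding xx by (simp add: field_simps eval_nat_numeral)
  also have "\<dots> = (\<bar>x$1 * y$2 - x$2 * y$1\<bar> / n\<^sup>2)\<^sup>2"
    using cross2_squared_eq[of x y] unfolding n_def[symmetric]
    by (simp add: power2_norm_eq_inner power_divide power_mult_distrib flip: power_mult)
  finally show "(norm ((1 / norm x) *\<^sub>R y - ((x \<bullet> y) / norm x ^ 3) *\<^sub>R x))\<^sup>2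
      = (\<bar>x$1 * y$2 - x$2 * y$1\<bar> / (norm x)\<^sup>2)\<^sup>2"
    by (simp add: n_def)
qed auto

lemma closed_C2_curve_unit_tangent:
  assumes "closed_C2_curve \<gamma> L"
  obtains \<gamma>' T' where
    "\<And>t. (\<gamma> has_vector_derivative \<gamma>' t) (at t)" "continuous_on UNIV \<gamma>'" "\<And>t. \<gamma>' t \<noteq> 0"
    "\<And>t. ((\<lambda>t. sgn (\<gamma>' t)) has_vector_derivative T' t) (at t)" "continuous_on UNIV T'"
    "\<And>t. norm (T' t) = \<bar>curvature \<gamma> t\<bar> * norm (\<gamma>' t)" "continuous_on UNIV (curvature \<gamma>)"
proof -
  from assms obtain \<gamma>' \<gamma>'' where
    \<gamma>': "\<And>t. (\<gamma> has_vector_derivative \<gamma>' t) (at t)" and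
    \<gamma>'': "\<And>t. (\<gamma>' has_vector_derivative \<gamma>'' t) (at t)" "continuous_on UNIV \<gamma>''" and
    regular: "\<And>t. vector_derivative \<gamma> (at t) \<noteq> 0"
    unfolding closed_C2_curve_def by blast
  have vd: "vector_derivative \<gamma> (at t) = \<gamma>' t" "vector_derivative \<gamma>' (at t) = \<gamma>'' t" for t
    using \<gamma>' \<gamma>''(1) by (auto intro: vector_derivative_at)
  then have nz: "\<gamma>' t \<noteq> 0" for t
    using regular by metis
  have cont: "continuous_on UNIV \<gamma>'"
    using \<gamma>''(1) by (intro continuous_at_imp_continuous_on) (auto intro: has_vector_derivative_continuous)
  have curv: "curvature \<gamma> t = (\<gamma>' t$1 * \<gamma>'' t$2 - \<gamma>' t$2 * \<gamma>'' t$1) / norm (\<gamma>' t) ^ 3" for t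
    by (simp add: curvature_def Let_def vd)
  define T' where
    "T' t = (1 / norm (\<gamma>' t)) *\<^sub>R \<gamma>'' t - ((\<gamma>' t \<bullet> \<gamma>'' t) / norm (\<gamma>' t) ^ 3) *\<^sub>R \<gamma>' t" for t
  show ?thesis
  proof (rule that[of \<gamma>' T'])
    show "((\<lambda>t. sgn (\<gamma>' t)) has_vector_derivative T' t) (at t)" for t
      unfolding T'_def by (rule has_vector_derivative_sgn[OF \<gamma>''(1) nz])
    show "continuous_on UNIV T'" "continuous_on UNIV (curvature \<gamma>)"
      unfolding T'_def curv[abs_def] by (auto intro!: continuous_intros cont \<gamma>''(2) simp: nz)
    show "norm (T' t) = \<bar>curvature \<gamma> t\<bar> * norm (\<gamma>' t)" for t
      using nz[of t] unfolding T'_def norm_sgn_derivative_eq_cross2[OF nz] curv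
      by (simp add: abs_divide field_simps eval_nat_numeral)
  qed (use \<gamma>' cont nz in auto)
qed

theorem lemmaA1:
  fixes \<gamma> :: "real \<Rightarrow> real^2" and L q :: real
  assumes "q \<ge> 1"
    and "closed_C2_curve \<gamma> L"
  shows "curve_integral_ds \<gamma> L (\<lambda>t. \<bar>curvature \<gamma> t\<bar> powr q)
           \<ge> diameter (range \<gamma>) powr (1 - q)"
proof -
  obtain \<gamma>' T' where \<gamma>': "\<And>t. (\<gamma> has_vector_derivative \<gamma>' t) (at t)" "continuous_on UNIV \<gamma>'"
      "\<And>t. \<gamma>' t \<noteq> 0"
    and T': "\<And>t. ((\<lambda>t. sgn (\<gamma>' t)) has_vector_derivative T' t) (at t)" "continuous_on UNIV T'"
    and \<kappa>: "\<And>t. norm (T' t) = \<bar>curvature \<gamma> t\<bar> * norm (\<gamma>' t)" "continuous_on UNIV (curvature \<gamma>)"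
    using closed_C2_curve_unit_tangent[OF assms(2)] by blast
  from assms(2) have L: "L > 0" "\<And>t. \<gamma> (t + L) = \<gamma> t"
    by (auto simp: closed_C2_curve_def)
  have "continuous_on UNIV \<gamma>"
    using \<gamma>'(1) by (intro continuous_at_imp_continuous_on) (auto intro: has_vector_derivative_continuous)
  from bounded_range_periodic[OF this L] diameter_bounded_bound[of "range \<gamma>"]
  have D: "0 \<le> diameter (range \<gamma>)" "\<And>t. norm (\<gamma> t - \<gamma> 0) \<le> diameter (range \<gamma>)"
    by (auto simp: dist_norm diameter_ge_0)
  have "diameter (range \<gamma>) powr (1 - q) \<le> integral {0..L} (\<lambda>t. \<bar>curvature \<gamma> t\<bar> powr q * norm (\<gamma>' t))"
    using L(2)[of 0] D \<kappa>
    by (intro closed_curve_curvature_energy_ge[OF assms(1) L(1) _ _ _ \<gamma>' T']) (auto intro: continuous_intros)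
  then show ?thesis
    using vector_derivative_at[OF \<gamma>'(1)] by (simp add: curve_integral_ds_def)
qed

end
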